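(* Let $m\ge2$ and let $\mathcal{A}\in\mathbb{S}_{m,n}$ be a Hankel tensor with generating vector $v=(v_0,\dots,v_{(n-1)m})^T$. If $\mathcal{A}$ is completely positive, then for every $s\in[m]$ its $s$-induced tensor is completely positive.
   Context: $\mathcal{A}=(a_{i_1\ldots i_m})$ is a Hankel tensor with generating vector $v$ if $a_{i_1\ldots i_m}=v_{i_1+\dots+i_m-m}$ for all indices. For $s\in[m]$, the $s$-induced tensor of $\mathcal{A}$ is the Hankel tensor $\mathcal{B}_s\in\mathbb{S}_{s,n}$ with generating vector $(v_0,\dots,v_{(n-1)s})^T$, i.e. $(\mathcal{B}_s)_{i_1\ldots i_s}=v_{i_1+\dots+i_s-s}$ (equivalently, $(\mathcal{B}_s)_{i_1\ldots i_s}=a_{i_1\ldots i_s1\ldots1}$). A tensor in $\mathbb{S}_{p,n}$ is completely positive if it equals $\sum_{k=1}^r(u^{(k)})^p$ with $u^{(k)}\in\mathbb{R}^n_+$, where $(u^p)_{i_1\ldots i_p}=u_{i_1}\cdots u_{i_p}$. *)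

theory Defs
  imports Complex_Main
begin

text \<open>Real tensors of order p and dimension n are represented as functions on index
lists: an index is a list of length p with entries in {0..<n} (0-based indexing,
so the paper's index i corresponds to i-1 here). Only values at valid indices matter.\<close>

definition tensor_indices :: "nat \<Rightarrow> nat \<Rightarrow> nat list set" where
  "tensor_indices p n = {is. length is = p \<and> (\<forall>i\<in>set is. i < n)}"

text \<open>Hankel tensor of order m, dimension n with generating vector v
(paper: a_{i1..im} = v_{i1+...+im-m} with 1-based indices; here 0-based, so v_{sum}).\<close>
definition is_hankel :: "nat \<Rightarrow> nat \<Rightarrow> (nat list \<Rightarrow> real) \<Rightarrow> (nat \<Rightarrow> real) \<Rightarrow> bool" where
  "is_hankel m n A v \<longleftrightarrow> (\<forall>is\<in>tensor_indices m n. A is = v (sum_list is))"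

definition hankel_tensor :: "(nat \<Rightarrow> real) \<Rightarrow> nat list \<Rightarrow> real" where
  "hankel_tensor v = (\<lambda>is. v (sum_list is))"

definition completely_positive :: "nat \<Rightarrow> nat \<Rightarrow> (nat list \<Rightarrow> real) \<Rightarrow> bool" where
  "completely_positive p n A \<longleftrightarrow>
     (\<exists>r::nat. \<exists>u :: nat \<Rightarrow> nat \<Rightarrow> real.
        (\<forall>k<r. \<forall>i<n. u k i \<ge> 0) \<and>
        (\<forall>is\<in>tensor_indices p n. A is = (\<Sum>k<r. \<Prod>j<p. u k (is ! j))))"

end

theory Submission
  imports Defs
begin

text \<open>Padding an index of length s with m - s zeros embeds the order-s indices into the
order-m ones without changing the index sum, so the s-induced tensor is the restriction of a
Hankel tensor to the padded indices. On these, a rank-one term u^m becomes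
(u_0)^(m-s) * u^s = (c u)^s with c = ((u_0)^(m-s))^(1/s) \<ge> 0, hence complete positivity is
inherited.\<close>

lemma prod_nth_append_replicate:
  fixes f :: "nat \<Rightarrow> 'a::comm_monoid_mult"
  assumes "length is = s" "s \<le> m"
  shows "(\<Prod>j<m. f ((is @ replicate (m - s) x) ! j)) = (\<Prod>j<s. f (is ! j)) * f x ^ (m - s)"
proof -
  have "{..<m} = {..<s} \<union> {s..<m}" using assms by auto
  hence "(\<Prod>j<m. f ((is @ replicate (m - s) x) ! j))
     = (\<Prod>j<s. f ((is @ replicate (m - s) x) ! j)) * (\<Prod>j\<in>{s..<m}. f ((is @ replicate (m - s) x) ! j))"
    by (simp add: prod.union_disjoint ivl_disj_int)
  also have "(\<Prod>j<s. f ((is @ replicate (m - s) x) ! j)) = (\<Prod>j<s. f (is ! j))"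
    using assms by (intro prod.cong) (auto simp: nth_append)
  also have "(\<Prod>j\<in>{s..<m}. f ((is @ replicate (m - s) x) ! j)) = (\<Prod>j\<in>{s..<m}. f x)"
    using assms by (intro prod.cong) (auto simp: nth_append)
  finally show ?thesis by simp
qed

lemma completely_positive_cong:
  assumes "\<And>is. is \<in> tensor_indices p n \<Longrightarrow> A is = B is"
  shows "completely_positive p n A \<longleftrightarrow> completely_positive p n B"
  using assms unfolding completely_positive_def by auto

lemma append_replicate_in_tensor_indices:
  assumes "is \<in> tensor_indices s n" "s \<le> p" "x < n"
  shows "is @ replicate (p - s) x \<in> tensor_indices p n"
  using assms by (auto simp: tensor_indices_def)

lemma completely_positive_pad_indices:
  assumes cp: "completely_positive p n A" and s: "1 \<le> s" "s \<le> p"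
  shows "completely_positive s n (\<lambda>is. A (is @ replicate (p - s) 0))"
proof (cases "n = 0")
  case True
  then have "tensor_indices s n = {}" using s by (auto simp: tensor_indices_def)
  then show ?thesis unfolding completely_positive_def by auto
next
  case False
  obtain r :: nat and u :: "nat \<Rightarrow> nat \<Rightarrow> real" where u_nonneg: "\<forall>k<r. \<forall>i<n. u k i \<ge> 0"
    and A_eq: "\<forall>is\<in>tensor_indices p n. A is = (\<Sum>k<r. \<Prod>j<p. u k (is ! j))"
    using cp unfolding completely_positive_def by blast
  define c where "c k = root s (u k 0 ^ (p - s))" for k
  define w where "w k i = c k * u k i" for k i
  have c_pow: "c k ^ s = u k 0 ^ (p - s)" if "k < r" for k
    unfolding c_def using s u_nonneg False that by (intro real_root_pow_pos2) auto
  have w_nonneg: "\<forall>k<r. \<forall>i<n. w k i \<ge> 0"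
    unfolding w_def c_def using u_nonneg False by (auto intro!: mult_nonneg_nonneg real_root_ge_zero)
  have "A (is @ replicate (p - s) 0) = (\<Sum>k<r. \<Prod>j<s. w k (is ! j))"
    if "is": "is \<in> tensor_indices s n" for "is"
  proof -
    have "A (is @ replicate (p - s) 0) = (\<Sum>k<r. \<Prod>j<p. u k ((is @ replicate (p - s) 0) ! j))"
      using A_eq append_replicate_in_tensor_indices[OF "is" s(2)] False by simp
    also have "\<dots> = (\<Sum>k<r. c k ^ s * (\<Prod>j<s. u k (is ! j)))"
      using "is" s c_pow
      by (intro sum.cong refl) (simp add: prod_nth_append_replicate tensor_indices_def mult.commute)
    also have "\<dots> = (\<Sum>k<r. \<Prod>j<s. w k (is ! j))"
      by (simp add: w_def prod.distrib)
    finally show ?thesis .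
  qed
  then show ?thesis unfolding completely_positive_def using w_nonneg by blast
qed

lemma hankel_tensor_eq_pad_indices:
  assumes "is_hankel p n A v" "is \<in> tensor_indices s n" "s \<le> p" "0 < n"
  shows "hankel_tensor v is = A (is @ replicate (p - s) 0)"
  using assms append_replicate_in_tensor_indices[OF assms(2,3,4)]
  by (simp add: is_hankel_def hankel_tensor_def sum_list_replicate)

theorem mainTheorem20:
  fixes m n :: nat and A :: "nat list \<Rightarrow> real" and v :: "nat \<Rightarrow> real"
  assumes "m \<ge> 2"
    and "is_hankel m n A v"
    and "completely_positive m n A"
  shows "\<forall>s\<in>{1..m}. completely_positive s n (hankel_tensor v)"
proof
  fix s assume s: "s \<in> {1..m}"
  have "hankel_tensor v is = A (is @ replicate (m - s) 0)" if "is \<in> tensor_indices s n" for "is"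
  proof (cases "n = 0")
    case True
    with that s show ?thesis by (auto simp: tensor_indices_def)
  next
    case False
    with that s assms(2) show ?thesis by (intro hankel_tensor_eq_pad_indices) auto
  qed
  then show "completely_positive s n (hankel_tensor v)"
    using completely_positive_pad_indices[OF assms(3)] s
    by (subst completely_positive_cong) auto
qed

end
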